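(* For every positive integer $h$ there are $\eta=\eta(h)>0$ and $\alpha=\alpha(h)>0$ such that the following holds for every oriented graph $H$ on $h$ vertices. Let $H_1,\dots,H_\ell$ be a partition of $V(H)$ such that each $H_i$ induces an acyclic digraph and for every $1\le i<j\le\ell$ either $H_i\rightarrow H_j$ or $H_j\rightarrow H_i$. Let $W_1,\dots,W_\ell$ be pairwise disjoint vertex sets in a tournament $T$ such that (1) $|W_i|\ge 2^{h-1}$ for every $1\le i\le\ell$, and (2) for every $1\le i\ne j\le\ell$, if $H_i\rightarrow H_j$ then $d(W_i,W_j)\ge 1-\eta$. Then $T$ contains at least $\alpha\cdot\prod_{i=1}^{\ell}|W_i|^{h_i}$ copies of $H$, where $h_i=|H_i|$.
   Context: An oriented graph is a directed graph without loops with at most one edge between any two distinct vertices. For disjoint vertex sets $X,Y$ of a digraph, $X\rightarrow Y$ means there is no pair $(x,y)\in X\times Y$ with an edge from $y$ to $x$. For disjoint $X,Y\subseteq V(T)$ in a tournament $T$, $d(X,Y)$ is the fraction of pairs $(x,y)\in X\times Y$ with $(x,y)\in E(T)$. A copy of $H$ is a (not necessarily induced) subgraph isomorphic to $H$. *)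

theory Defs imports Complex_Main begin

definition oriented_graph :: "'a set \<Rightarrow> ('a \<times> 'a) set \<Rightarrow> bool" where
  "oriented_graph V E \<longleftrightarrow> E \<subseteq> V \<times> V \<and> (\<forall>x. (x, x) \<notin> E)
     \<and> (\<forall>x y. (x, y) \<in> E \<longrightarrow> (y, x) \<notin> E)"

definition tournament :: "'a set \<Rightarrow> ('a \<times> 'a) set \<Rightarrow> bool" where
  "tournament V E \<longleftrightarrow> finite V \<and> oriented_graph V E
     \<and> (\<forall>x\<in>V. \<forall>y\<in>V. x \<noteq> y \<longrightarrow> (x, y) \<in> E \<or> (y, x) \<in> E)"

definition arr :: "('a \<times> 'a) set \<Rightarrow> 'a set \<Rightarrow> 'a set \<Rightarrow> bool" where
  "arr E X Y \<longleftrightarrow> (\<forall>x\<in>X. \<forall>y\<in>Y. (y, x) \<notin> E)"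

definition dens :: "('a \<times> 'a) set \<Rightarrow> 'a set \<Rightarrow> 'a set \<Rightarrow> real" where
  "dens E X Y = real (card {p \<in> X \<times> Y. p \<in> E}) / (real (card X) * real (card Y))"

definition induces_acyclic :: "('a \<times> 'a) set \<Rightarrow> 'a set \<Rightarrow> bool" where
  "induces_acyclic E X \<longleftrightarrow> acyclic (E \<inter> (X \<times> X))"

definition copies :: "'a set \<Rightarrow> ('a \<times> 'a) set \<Rightarrow> 'b set \<Rightarrow> ('b \<times> 'b) set
    \<Rightarrow> ('b set \<times> ('b \<times> 'b) set) set" where
  "copies VH EH VT ET = {(V', E'). \<exists>f. inj_on f VH \<and> f ` VH \<subseteq> VT
      \<and> (\<forall>(u, v)\<in>EH. (f u, f v) \<in> ET)
      \<and> V' = f ` VH \<and> E' = (\<lambda>(u, v). (f u, f v)) ` EH}"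

end

theory Submission imports Defs "HOL-Library.FuncSet" begin

text \<open>Let \<open>m = 2 ^ (h - 1)\<close> and pick, for every \<open>i\<close>, an \<open>m\<close>-subset \<open>S i\<close> of \<open>W i\<close>.
  Call the tuple forward if every pair of vertices in \<open>S i \<times> S j\<close> is an edge whenever
  \<open>arr EH (HP i) (HP j)\<close>. A fixed pair \<open>(x, y)\<close> lies in \<open>S i \<times> S j\<close> for at most a fraction
  \<open>m\<^sup>2 / (card (W i) * card (W j))\<close> of all tuples, and at most an \<open>\<eta>\<close>-fraction of
  \<open>W i \<times> W j\<close> are non-edges, so for \<open>\<eta>\<close> small the union bound leaves at least half of the
  tuples forward. In a forward tuple each acyclic part \<open>HP i\<close> embeds into the tournament
  on \<open>S i\<close>, and these embeddings glue to an embedding of \<open>H\<close> with \<open>HP i\<close> sent into \<open>S i\<close>.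
  A fixed embedding is compatible with at most a fraction \<open>\<Prod>i. (m / card (W i)) ^ card (HP i)\<close>
  of the tuples, hence there are at least \<open>\<Prod>i. card (W i) ^ card (HP i) / (2 * m ^ h)\<close>
  embeddings, and each copy of \<open>H\<close> arises from at most \<open>h ^ h\<close> of them.\<close>

definition hom_on :: "('a \<times> 'a) set \<Rightarrow> ('b \<times> 'b) set \<Rightarrow> 'a set \<Rightarrow> ('a \<Rightarrow> 'b) \<Rightarrow> bool" where
  "hom_on E R X g \<longleftrightarrow> (\<forall>u\<in>X. \<forall>v\<in>X. (u, v) \<in> E \<longrightarrow> (g u, g v) \<in> R)"

lemma hom_on_converse [simp]: "hom_on (E\<inverse>) (R\<inverse>) X g \<longleftrightarrow> hom_on E R X g"
  by (auto simp: hom_on_def)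

lemma acyclic_has_source:
  assumes "finite X" "acyclic (E \<inter> X \<times> X)" "X \<noteq> {}"
  shows "\<exists>z\<in>X. \<forall>y\<in>X. (y, z) \<notin> E"
proof -
  have "wf (E \<inter> X \<times> X)"
    using assms(1,2) by (intro finite_acyclic_wf) (auto intro: finite_subset[of _ "X \<times> X"])
  moreover obtain z0 where "z0 \<in> X" using assms(3) by blast
  ultimately obtain z where "z \<in> X" "\<And>y. (y, z) \<in> E \<inter> X \<times> X \<Longrightarrow> y \<notin> X"
    by (rule wfE_min) blast
  then show ?thesis by blast
qed

lemma embedding_extend_source:
  assumes "inj_on g (X - {z})" "hom_on E R (X - {z}) g" "g ` (X - {z}) \<subseteq> {w \<in> S. (v, w) \<in> R}"
    and "v \<in> S" "(v, v) \<notin> R" "\<forall>y\<in>X. (y, z) \<notin> E"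
  shows "\<exists>g. inj_on g X \<and> g ` X \<subseteq> S \<and> hom_on E R X g"
proof (intro exI conjI)
  have v: "v \<notin> g ` (X - {z})" using assms(3,5) by blast
  show "inj_on (g(z := v)) X"
  proof (rule inj_onI)
    fix x y assume "x \<in> X" "y \<in> X" "(g(z := v)) x = (g(z := v)) y"
    then show "x = y"
      using assms(1) v by (cases "x = z"; cases "y = z") (auto simp: inj_on_def)
  qed
  show "g(z := v) ` X \<subseteq> S" using assms(3,4) by auto
  show "hom_on E R X (g(z := v))"
    using assms(2,3,6) by (auto simp: hom_on_def)
qed

lemma tournament_halving:
  assumes "tournament VT ET" "S \<subseteq> VT" "v \<in> S" "2 ^ Suc k \<le> card S"
  shows "2 ^ k \<le> card {w \<in> S. (v, w) \<in> ET} \<or> 2 ^ k \<le> card {w \<in> S. (w, v) \<in> ET}"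
proof -
  have "finite S" using assms(1,2) by (auto simp: tournament_def intro: finite_subset)
  have "S - {v} \<subseteq> {w \<in> S. (v, w) \<in> ET} \<union> {w \<in> S. (w, v) \<in> ET}"
    using assms(1-3) by (auto simp: tournament_def)
  then have "card (S - {v}) \<le> card ({w \<in> S. (v, w) \<in> ET} \<union> {w \<in> S. (w, v) \<in> ET})"
    using \<open>finite S\<close> by (intro card_mono) auto
  also have "\<dots> \<le> card {w \<in> S. (v, w) \<in> ET} + card {w \<in> S. (w, v) \<in> ET}"
    by (rule card_Un_le)
  finally show ?thesis using assms(3,4) \<open>finite S\<close> by auto
qed

text \<open>Send a source (or a sink) of the acyclic digraph to a vertex \<open>v\<close> with at least \<open>2 ^ k\<close>
  out- (or in-)neighbours in \<open>S\<close>, and embed the rest into that neighbourhood.\<close>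

lemma acyclic_embeds_into_tournament:
  assumes "tournament VT ET" "finite X" "acyclic (E \<inter> X \<times> X)" "card X \<le> Suc k"
    and "2 ^ k \<le> card S" "S \<subseteq> VT"
  shows "\<exists>g. inj_on g X \<and> g ` X \<subseteq> S \<and> hom_on E ET X g"
  using assms
proof (induction k arbitrary: X S)
  case 0
  then obtain v where v: "v \<in> S" by fastforce
  have "X \<subseteq> {z}" if "z \<in> X" for z
    using "0.prems"(2,4) that by (auto simp: card_le_Suc0_iff_eq)
  moreover have "(z, z) \<notin> E" if "z \<in> X" for z
    using "0.prems"(3) that by (meson IntI acyclic_def mem_Sigma_iff r_into_trancl')
  ultimately have "inj_on (\<lambda>_. v) X \<and> hom_on E ET X (\<lambda>_. v)"
    by (auto simp: hom_on_def inj_on_def)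
  then show ?case using v by blast
next
  case (Suc k)
  show ?case
  proof (cases "X = {}")
    case True
    then show ?thesis by (auto simp: hom_on_def)
  next
    case False
    then obtain v where v: "v \<in> S" using Suc.prems(5) by fastforce
    have irrefl: "(v, v) \<notin> ET" using Suc.prems(1) by (simp add: tournament_def oriented_graph_def)
    have rest: "finite (X - {z})" "acyclic (E \<inter> (X - {z}) \<times> (X - {z}))" "card (X - {z}) \<le> Suc k"
      if "z \<in> X" for z
      using Suc.prems(2-4) that by (auto intro: acyclic_subset)
    from tournament_halving[OF Suc.prems(1,6) v Suc.prems(5)] show ?thesis
    proof
      assume big: "2 ^ k \<le> card {w \<in> S. (v, w) \<in> ET}"
      obtain z where z: "z \<in> X" "\<forall>y\<in>X. (y, z) \<notin> E"
        using acyclic_has_source[OF Suc.prems(2,3) False] by blast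
      obtain g where "inj_on g (X - {z})" "hom_on E ET (X - {z}) g"
        "g ` (X - {z}) \<subseteq> {w \<in> S. (v, w) \<in> ET}"
        using Suc.IH[OF Suc.prems(1) rest[OF z(1)] big] Suc.prems(6) by blast
      then show ?thesis using v irrefl z(2) by (rule embedding_extend_source)
    next
      assume big: "2 ^ k \<le> card {w \<in> S. (w, v) \<in> ET}"
      have "acyclic (E\<inverse> \<inter> X \<times> X)"
        using Suc.prems(3) by (metis acyclic_converse converse_Int converse_Times)
      then obtain z where z: "z \<in> X" "\<forall>y\<in>X. (y, z) \<notin> E\<inverse>"
        using acyclic_has_source[OF Suc.prems(2) _ False] by blast
      obtain g where "inj_on g (X - {z})" "hom_on E ET (X - {z}) g"
        "g ` (X - {z}) \<subseteq> {w \<in> S. (w, v) \<in> ET}"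
        using Suc.IH[OF Suc.prems(1) rest[OF z(1)] big] Suc.prems(6) by blast
      then have "\<exists>g. inj_on g X \<and> g ` X \<subseteq> S \<and> hom_on (E\<inverse>) (ET\<inverse>) X g"
        using v irrefl z(2) by (intro embedding_extend_source[of g X z "E\<inverse>" "ET\<inverse>" S v]) simp_all
      then show ?thesis by simp
    qed
  qed
qed

definition subset_tuples :: "nat \<Rightarrow> (nat \<Rightarrow> 'a set) \<Rightarrow> nat \<Rightarrow> (nat \<Rightarrow> 'a set) \<Rightarrow> (nat \<Rightarrow> 'a set) set" where
  "subset_tuples l W m B = (\<Pi>\<^sub>E k\<in>{..<l}. {S. B k \<subseteq> S \<and> S \<subseteq> W k \<and> card S = m})"

lemma finite_subset_tuples: "\<forall>k<l. finite (W k) \<Longrightarrow> finite (subset_tuples l W m B)"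
  unfolding subset_tuples_def by (intro finite_PiE) (auto intro: finite_subset[of _ "Pow (W _)"])

lemma card_supersets_of_card:
  assumes "finite A" "B \<subseteq> A" "card B \<le> m"
  shows "card {S. B \<subseteq> S \<and> S \<subseteq> A \<and> card S = m} = (card A - card B) choose (m - card B)"
proof -
  have "finite B" using assms(1,2) by (rule finite_subset[rotated])
  have "bij_betw (\<lambda>S. S - B) {S. B \<subseteq> S \<and> S \<subseteq> A \<and> card S = m} {S. S \<subseteq> A - B \<and> card S = m - card B}"
  proof (rule bij_betw_byWitness[where f' = "\<lambda>S. S \<union> B"])
    show "(\<lambda>S. S \<union> B) ` {S. S \<subseteq> A - B \<and> card S = m - card B} \<subseteq> {S. B \<subseteq> S \<and> S \<subseteq> A \<and> card S = m}"
    proof (rule image_subsetI)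
      fix S assume S: "S \<in> {S. S \<subseteq> A - B \<and> card S = m - card B}"
      then have "card (S \<union> B) = card S + card B"
        using assms(1) \<open>finite B\<close> by (intro card_Un_disjoint) (auto intro: finite_subset)
      then show "S \<union> B \<in> {S. B \<subseteq> S \<and> S \<subseteq> A \<and> card S = m}" using S assms(2,3) by auto
    qed
  qed (use assms(1) \<open>finite B\<close> in \<open>auto simp: card_Diff_subset\<close>)
  then have "card {S. B \<subseteq> S \<and> S \<subseteq> A \<and> card S = m} = card {S. S \<subseteq> A - B \<and> card S = m - card B}"
    by (rule bij_betw_same_card)
  also have "\<dots> = card (A - B) choose (m - card B)" using assms(1) by (simp add: n_subsets)
  finally show ?thesis using assms(2) \<open>finite B\<close> by (simp add: card_Diff_subset)
qed

lemma card_subset_tuples: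
  assumes "\<forall>k<l. finite (W k) \<and> B k \<subseteq> W k \<and> card (B k) \<le> m"
  shows "card (subset_tuples l W m B) = (\<Prod>k<l. (card (W k) - card (B k)) choose (m - card (B k)))"
  unfolding subset_tuples_def using assms by (simp add: card_PiE card_supersets_of_card)

lemma binomial_diff_mult_power_le:
  "b \<le> m \<Longrightarrow> m \<le> n \<Longrightarrow> real ((n - b) choose (m - b)) * real n ^ b \<le> real (n choose m) * real m ^ b"
proof (induction b)
  case 0
  then show ?case by simp
next
  case (Suc b)
  define n' where "n' = n - b"
  define m' where "m' = m - b"
  obtain c where c: "m' = Suc c" using Suc.prems by (metis m'_def Suc_diff_Suc Suc_le_lessD)
  have absorb: "real ((n' - 1) choose c) * real n' = real m' * real (n' choose m')"
    using binomial_absorption[of c n'] c by (metis mult.commute of_nat_mult)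
  have ratio: "real m' * real n \<le> real n' * real m"
  proof -
    have "m' * n + n * b = n' * m + m * b"
      using Suc.prems by (simp add: m'_def n'_def algebra_simps)
    moreover have "m * b \<le> n * b" using Suc.prems by simp
    ultimately have "m' * n \<le> n' * m" by linarith
    then show ?thesis by (metis of_nat_le_iff of_nat_mult)
  qed
  have IH: "real (n' choose m') * real n ^ b \<le> real (n choose m) * real m ^ b"
    using Suc by (simp add: n'_def m'_def)
  have "real ((n' - 1) choose c) * real n ^ Suc b * real n'
      = real m' * real n * (real (n' choose m') * real n ^ b)"
    using absorb by (simp add: algebra_simps)
  also have "\<dots> \<le> real n' * real m * (real (n choose m) * real m ^ b)"
    by (rule mult_mono[OF ratio IH]) auto
  also have "\<dots> = real (n choose m) * real m ^ Suc b * real n'" by (simp add: algebra_simps)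
  finally have "real ((n' - 1) choose c) * real n ^ Suc b \<le> real (n choose m) * real m ^ Suc b"
    using c Suc.prems by (simp add: n'_def m'_def)
  moreover have "n - Suc b = n' - 1" "m - Suc b = c" using c by (auto simp: n'_def m'_def)
  ultimately show ?case by simp
qed

lemma subset_tuples_containing_le:
  assumes "\<forall>k<l. finite (W k) \<and> m \<le> card (W k)"
  shows "real (card (subset_tuples l W m B)) * (\<Prod>k<l. real (card (W k)) ^ card (B k))
    \<le> real (card (subset_tuples l W m (\<lambda>_. {}))) * real m ^ (\<Sum>k<l. card (B k))"
proof (cases "\<forall>k<l. B k \<subseteq> W k \<and> card (B k) \<le> m")
  case True
  have "real (card (subset_tuples l W m B)) * (\<Prod>k<l. real (card (W k)) ^ card (B k))
      = (\<Prod>k<l. real ((card (W k) - card (B k)) choose (m - card (B k))) * real (card (W k)) ^ card (B k))"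
    using True assms by (simp add: card_subset_tuples prod.distrib)
  also have "\<dots> \<le> (\<Prod>k<l. real (card (W k) choose m) * real m ^ card (B k))"
    using True assms by (intro prod_mono) (auto intro: binomial_diff_mult_power_le)
  also have "\<dots> = real (card (subset_tuples l W m (\<lambda>_. {}))) * real m ^ (\<Sum>k<l. card (B k))"
    using assms by (simp add: card_subset_tuples prod.distrib power_sum)
  finally show ?thesis .
next
  case False
  then obtain k where "k < l" "\<not> (B k \<subseteq> W k \<and> card (B k) \<le> m)" by blast
  have "\<not> (B k \<subseteq> S \<and> S \<subseteq> W k \<and> card S = m)" for S
  proof
    assume S: "B k \<subseteq> S \<and> S \<subseteq> W k \<and> card S = m"
    then have "finite S" using assms \<open>k < l\<close> finite_subset by blast
    with S have "card (B k) \<le> m" using card_mono by blast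
    with S \<open>\<not> (B k \<subseteq> W k \<and> card (B k) \<le> m)\<close> show False by blast
  qed
  then have "{S. B k \<subseteq> S \<and> S \<subseteq> W k \<and> card S = m} = {}" by blast
  then have "subset_tuples l W m B = {}"
    using \<open>k < l\<close> by (auto simp: subset_tuples_def PiE_eq_empty_iff)
  then show ?thesis by simp
qed

lemma subset_tuples_containing_pair_le:
  assumes "\<forall>k<l. finite (W k) \<and> m \<le> card (W k)" "i < l" "j < l" "i \<noteq> j"
  shows "real (card (subset_tuples l W m (\<lambda>k. (if k = i then {x} else {}) \<union> (if k = j then {y} else {}))))
      * (real (card (W i)) * real (card (W j)))
    \<le> real (card (subset_tuples l W m (\<lambda>_. {}))) * real m ^ 2"
proof -
  define B where "B = (\<lambda>k. (if k = i then {x} else {}) \<union> (if k = j then {y} else {}))"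
  have card_B: "card (B k) = (if k = i then 1 else 0) + (if k = j then 1 else 0)" for k
    using assms(4) by (simp add: B_def)
  have "(\<Prod>k<l. real (card (W k)) ^ card (B k))
      = (\<Prod>k<l. (if k = i then real (card (W k)) else 1) * (if k = j then real (card (W k)) else 1))"
    by (rule prod.cong) (auto simp: card_B assms(4))
  also have "\<dots> = real (card (W i)) * real (card (W j))" using assms(2,3) by (simp add: prod.distrib)
  finally have "(\<Prod>k<l. real (card (W k)) ^ card (B k)) = real (card (W i)) * real (card (W j))" .
  moreover have "(\<Sum>k<l. card (B k)) = 2" using assms(2,3) by (simp add: card_B sum.distrib)
  ultimately show ?thesis
    using subset_tuples_containing_le[OF assms(1), of B] by (simp add: B_def)
qed

lemma subset_tuples_hitting_pair_le:
  assumes W: "\<forall>k<l. finite (W k) \<and> m \<le> card (W k)" and "0 \<le> \<eta>"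
    and ij: "i < l" "j < l" "i \<noteq> j"
    and D: "D \<subseteq> W i \<times> W j" "real (card D) \<le> \<eta> * (real (card (W i)) * real (card (W j)))"
  shows "real (card (\<Union>(x, y)\<in>D. subset_tuples l W m (\<lambda>k. (if k = i then {x} else {}) \<union> (if k = j then {y} else {}))))
    \<le> \<eta> * real m ^ 2 * real (card (subset_tuples l W m (\<lambda>_. {})))"
proof (cases "D = {}")
  case True
  then show ?thesis using \<open>0 \<le> \<eta>\<close> by simp
next
  case False
  define N where "N = real (card (subset_tuples l W m (\<lambda>_. {})))"
  define T where "T x y = subset_tuples l W m (\<lambda>k. (if k = i then {x} else {}) \<union> (if k = j then {y} else {}))"
    for x y
  define c where "c = real (card (W i)) * real (card (W j))"
  obtain x y where "(x, y) \<in> D" using False by auto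
  then have "x \<in> W i" "y \<in> W j" using D(1) by auto
  then have pos: "c > 0" using W ij by (auto simp: c_def card_gt_0_iff zero_less_mult_iff)
  have "finite D" using D(1) W ij by (auto intro: finite_subset)
  then have "real (card (\<Union>(x, y)\<in>D. T x y)) \<le> (\<Sum>(x, y)\<in>D. real (card (T x y)))"
    using card_UN_le[of D "\<lambda>(x, y). T x y"] by (simp add: case_prod_unfold flip: of_nat_sum)
  also have "\<dots> \<le> (\<Sum>(x, y)\<in>D. N * real m ^ 2 / c)"
  proof (rule sum_mono, clarify)
    fix x y
    have "real (card (T x y)) * c \<le> N * real m ^ 2"
      unfolding T_def N_def c_def using ij by (intro subset_tuples_containing_pair_le[OF W]) auto
    then show "real (card (T x y)) \<le> N * real m ^ 2 / c" using pos by (simp add: pos_le_divide_eq)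
  qed
  also have "\<dots> = real (card D) * (N * real m ^ 2 / c)" by simp
  also have "\<dots> \<le> \<eta> * c * (N * real m ^ 2 / c)"
    using D(2) by (intro mult_right_mono) (simp_all add: N_def c_def)
  also have "\<dots> = \<eta> * real m ^ 2 * N" using pos by simp
  finally show ?thesis by (simp add: T_def N_def)
qed

lemma subset_tuples_hitting_le:
  assumes W: "\<forall>k<l. finite (W k) \<and> m \<le> card (W k)" and "0 \<le> \<eta>"
    and P: "P \<subseteq> {(i, j). i < l \<and> j < l \<and> i \<noteq> j}"
    and D: "\<And>i j. (i, j) \<in> P \<Longrightarrow> D i j \<subseteq> W i \<times> W j
      \<and> real (card (D i j)) \<le> \<eta> * (real (card (W i)) * real (card (W j)))"
  shows "real (card {t \<in> subset_tuples l W m (\<lambda>_. {}). \<exists>(i, j)\<in>P. \<exists>(x, y)\<in>D i j. x \<in> t i \<and> y \<in> t j})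
    \<le> real (card P) * \<eta> * real m ^ 2 * real (card (subset_tuples l W m (\<lambda>_. {})))"
proof -
  define N where "N = real (card (subset_tuples l W m (\<lambda>_. {})))"
  define T where "T i j x y = subset_tuples l W m (\<lambda>k. (if k = i then {x} else {}) \<union> (if k = j then {y} else {}))"
    for i j x y
  have fin_P: "finite P" using P by (auto intro: finite_subset[of _ "{..<l} \<times> {..<l}"])
  have fin_D: "finite (D i j)" if "(i, j) \<in> P" for i j
  proof (rule finite_subset)
    show "D i j \<subseteq> W i \<times> W j" using D[OF that] by blast
    show "finite (W i \<times> W j)" using W P that by auto
  qed
  have fin_T: "finite (T i j x y)" for i j x y
    unfolding T_def using W by (simp add: finite_subset_tuples)
  have "{t \<in> subset_tuples l W m (\<lambda>_. {}). \<exists>(i, j)\<in>P. \<exists>(x, y)\<in>D i j. x \<in> t i \<and> y \<in> t j}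
      \<subseteq> (\<Union>(i, j)\<in>P. \<Union>(x, y)\<in>D i j. T i j x y)"
  proof
    fix t assume "t \<in> {t \<in> subset_tuples l W m (\<lambda>_. {}). \<exists>(i, j)\<in>P. \<exists>(x, y)\<in>D i j. x \<in> t i \<and> y \<in> t j}"
    then obtain i j x y where t: "t \<in> subset_tuples l W m (\<lambda>_. {})" "(i, j) \<in> P" "(x, y) \<in> D i j"
      "x \<in> t i" "y \<in> t j"
      by blast
    then have "t \<in> T i j x y" by (auto simp: T_def subset_tuples_def PiE_iff)
    then show "t \<in> (\<Union>(i, j)\<in>P. \<Union>(x, y)\<in>D i j. T i j x y)" using t(2,3) by blast
  qed
  then have "real (card {t \<in> subset_tuples l W m (\<lambda>_. {}). \<exists>(i, j)\<in>P. \<exists>(x, y)\<in>D i j. x \<in> t i \<and> y \<in> t j})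
      \<le> real (card (\<Union>(i, j)\<in>P. \<Union>(x, y)\<in>D i j. T i j x y))"
    using fin_P fin_D fin_T by (intro of_nat_mono card_mono) auto
  also have "\<dots> \<le> (\<Sum>(i, j)\<in>P. real (card (\<Union>(x, y)\<in>D i j. T i j x y)))"
    using card_UN_le[OF fin_P, of "\<lambda>(i, j). \<Union>(x, y)\<in>D i j. T i j x y"]
    by (simp add: case_prod_unfold flip: of_nat_sum)
  also have "\<dots> \<le> (\<Sum>(i, j)\<in>P. \<eta> * real m ^ 2 * N)"
    using P D \<open>0 \<le> \<eta>\<close> unfolding T_def N_def
    by (intro sum_mono) (auto intro!: subset_tuples_hitting_pair_le[OF W])
  finally show ?thesis by (simp add: N_def algebra_simps)
qed

definition embeddings :: "'a set \<Rightarrow> ('a \<times> 'a) set \<Rightarrow> 'b set \<Rightarrow> ('b \<times> 'b) set \<Rightarrow> ('a \<Rightarrow> 'b) set" where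
  "embeddings VH EH VT ET = {f \<in> VH \<rightarrow>\<^sub>E VT. inj_on f VH \<and> (\<forall>(u, v)\<in>EH. (f u, f v) \<in> ET)}"

lemma card_embeddings_le_copies:
  assumes "finite VH" "finite VT" "ET \<subseteq> VT \<times> VT"
  shows "card (embeddings VH EH VT ET) \<le> card VH ^ card VH * card (copies VH EH VT ET)"
proof -
  have sub: "copies VH EH VT ET \<subseteq> Pow VT \<times> Pow ET"
    unfolding copies_def by fastforce
  moreover have "finite ET" using assms(2,3) finite_subset by blast
  ultimately have fin: "finite (copies VH EH VT ET)"
    using assms(2) by (auto intro: finite_subset)
  have fin_copy: "finite (fst c)" if "c \<in> copies VH EH VT ET" for c
  proof -
    have "c \<in> Pow VT \<times> Pow ET" using that sub by blast
    then have "fst c \<subseteq> VT" by (cases c) simp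
    then show ?thesis using assms(2) finite_subset by blast
  qed
  have card_copy: "card (fst c) = card VH" if "c \<in> copies VH EH VT ET" for c
    using that unfolding copies_def by (auto intro: card_image)
  have "embeddings VH EH VT ET \<subseteq> (\<Union>c\<in>copies VH EH VT ET. VH \<rightarrow>\<^sub>E fst c)"
  proof
    fix f assume f: "f \<in> embeddings VH EH VT ET"
    then have "(f ` VH, (\<lambda>(u, v). (f u, f v)) ` EH) \<in> copies VH EH VT ET"
      unfolding embeddings_def copies_def by (auto simp: PiE_iff)
    moreover have "f \<in> VH \<rightarrow>\<^sub>E f ` VH" using f by (auto simp: embeddings_def PiE_iff)
    ultimately show "f \<in> (\<Union>c\<in>copies VH EH VT ET. VH \<rightarrow>\<^sub>E fst c)" by force
  qed
  then have "card (embeddings VH EH VT ET) \<le> card (\<Union>c\<in>copies VH EH VT ET. VH \<rightarrow>\<^sub>E fst c)"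
    using fin assms(1) fin_copy by (intro card_mono) (auto intro!: finite_PiE)
  also have "\<dots> \<le> (\<Sum>c\<in>copies VH EH VT ET. card (VH \<rightarrow>\<^sub>E fst c))"
    using fin by (rule card_UN_le)
  also have "\<dots> = (\<Sum>c\<in>copies VH EH VT ET. card VH ^ card VH)"
    using assms(1) card_copy by (intro sum.cong) (simp_all add: card_PiE)
  finally show ?thesis by (simp add: mult.commute)
qed

lemma card_non_edges_le:
  assumes "finite A" "finite B" "1 - \<eta> \<le> dens E A B"
  shows "real (card {p \<in> A \<times> B. p \<notin> E}) \<le> \<eta> * (real (card A) * real (card B))"
proof (cases "A = {} \<or> B = {}")
  case True
  then show ?thesis by auto
next
  case False
  define c where "c = real (card A) * real (card B)"
  define g where "g = real (card {p \<in> A \<times> B. p \<in> E})"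
  have "card (A \<times> B) = card ({p \<in> A \<times> B. p \<in> E} \<union> {p \<in> A \<times> B. p \<notin> E})"
    by (rule arg_cong[where f = card]) auto
  also have "\<dots> = card {p \<in> A \<times> B. p \<in> E} + card {p \<in> A \<times> B. p \<notin> E}"
    using assms(1,2) by (intro card_Un_disjoint) auto
  finally have split: "c = g + real (card {p \<in> A \<times> B. p \<notin> E})"
    by (simp add: c_def g_def card_cartesian_product flip: of_nat_add of_nat_mult)
  have "c > 0" using False assms(1,2) by (simp add: c_def card_gt_0_iff)
  moreover have "1 - \<eta> \<le> g / c" using assms(3) by (simp add: dens_def c_def g_def)
  ultimately have "c - \<eta> * c \<le> g" by (simp add: pos_le_divide_eq left_diff_distrib)
  then show ?thesis unfolding c_def[symmetric] using split by linarith
qed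

locale dense_blowup =
  fixes VH :: "'a set" and EH :: "('a \<times> 'a) set" and l :: nat and HP :: "nat \<Rightarrow> 'a set"
    and VT :: "'b set" and ET :: "('b \<times> 'b) set" and W :: "nat \<Rightarrow> 'b set" and \<eta> :: real
  assumes finite_VH: "finite VH" and oriented: "oriented_graph VH EH"
    and parts_nonempty: "\<forall>i<l. HP i \<noteq> {}" and parts_cover: "(\<Union>i<l. HP i) = VH"
    and parts_disjoint: "\<forall>i<l. \<forall>j<l. i \<noteq> j \<longrightarrow> HP i \<inter> HP j = {}"
    and parts_acyclic: "\<forall>i<l. induces_acyclic EH (HP i)"
    and parts_ordered: "\<forall>i<l. \<forall>j<l. i < j \<longrightarrow> arr EH (HP i) (HP j) \<or> arr EH (HP j) (HP i)"
    and tournament: "tournament VT ET"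
    and W_subset: "\<forall>i<l. W i \<subseteq> VT" and W_disjoint: "\<forall>i<l. \<forall>j<l. i \<noteq> j \<longrightarrow> W i \<inter> W j = {}"
    and W_large: "\<forall>i<l. 2 ^ (card VH - 1) \<le> card (W i)"
    and W_dense: "\<forall>i<l. \<forall>j<l. i \<noteq> j \<longrightarrow> arr EH (HP i) (HP j) \<longrightarrow> 1 - \<eta> \<le> dens ET (W i) (W j)"
begin

definition m :: nat where "m = 2 ^ (card VH - 1)"

definition part_of :: "'a \<Rightarrow> nat" where "part_of u = (THE i. i < l \<and> u \<in> HP i)"

definition forward :: "(nat \<Rightarrow> 'b set) \<Rightarrow> bool" where
  "forward t \<longleftrightarrow> (\<forall>i<l. \<forall>j<l. i \<noteq> j \<longrightarrow> arr EH (HP i) (HP j) \<longrightarrow> (\<forall>x\<in>t i. \<forall>y\<in>t j. (x, y) \<in> ET))"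

lemma finite_VT: "finite VT"
  using tournament by (simp add: tournament_def)

lemma W_finite_large: "\<forall>k<l. finite (W k) \<and> m \<le> card (W k)"
  using W_subset W_large finite_VT by (auto simp: m_def intro: finite_subset)

lemma part_subset: "i < l \<Longrightarrow> HP i \<subseteq> VH"
  using parts_cover by auto

lemma card_part_le: "i < l \<Longrightarrow> card (HP i) \<le> card VH"
  using part_subset finite_VH by (rule card_mono[rotated])

lemma sum_card_parts: "(\<Sum>i<l. card (HP i)) = card VH"
proof -
  have "card (\<Union>i<l. HP i) = (\<Sum>i<l. card (HP i))"
    using part_subset finite_VH parts_disjoint by (intro card_UN_disjoint) (auto intro: finite_subset)
  then show ?thesis using parts_cover by simp
qed

lemma number_of_parts_le: "l \<le> card VH"
proof -
  have "(\<Sum>i<l. 1) \<le> (\<Sum>i<l. card (HP i))"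
    using parts_nonempty part_subset finite_VH
    by (intro sum_mono) (auto simp: Suc_le_eq card_gt_0_iff intro: finite_subset)
  then show ?thesis using sum_card_parts by simp
qed

lemma part_of_eq: "i < l \<Longrightarrow> u \<in> HP i \<Longrightarrow> part_of u = i"
  unfolding part_of_def using parts_disjoint by (intro the_equality) auto

lemma part_of_in: "u \<in> VH \<Longrightarrow> part_of u < l \<and> u \<in> HP (part_of u)"
  using parts_cover part_of_eq by auto

lemma edge_between_parts_arr:
  assumes "(u, v) \<in> EH" "i < l" "j < l" "u \<in> HP i" "v \<in> HP j" "i \<noteq> j"
  shows "arr EH (HP i) (HP j)"
proof -
  have "\<not> arr EH (HP j) (HP i)" using assms(1,4,5) by (auto simp: arr_def)
  moreover have "arr EH (HP i) (HP j) \<or> arr EH (HP j) (HP i)"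
  proof (cases "i < j")
    case True
    then show ?thesis using parts_ordered assms(2,3) by blast
  next
    case False
    then have "j < i" using assms(6) by linarith
    then show ?thesis using parts_ordered assms(2,3) by blast
  qed
  ultimately show ?thesis by blast
qed

definition glue :: "(nat \<Rightarrow> 'a \<Rightarrow> 'b) \<Rightarrow> 'a \<Rightarrow> 'b" where
  "glue G = restrict (\<lambda>u. G (part_of u) u) VH"

lemma glue_eq: "i < l \<Longrightarrow> u \<in> HP i \<Longrightarrow> glue G u = G i u"
  using part_of_eq part_subset by (auto simp: glue_def)

lemma inj_on_glue:
  assumes G: "\<And>i. i < l \<Longrightarrow> inj_on (G i) (HP i) \<and> G i ` HP i \<subseteq> W i"
  shows "inj_on (glue G) VH"
proof (rule inj_onI)
  fix u v assume uv: "u \<in> VH" "v \<in> VH" "glue G u = glue G v"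
  have u: "part_of u < l" "u \<in> HP (part_of u)" and v: "part_of v < l" "v \<in> HP (part_of v)"
    using part_of_in[OF uv(1)] part_of_in[OF uv(2)] by simp_all
  show "u = v"
  proof (cases "part_of u = part_of v")
    case True
    then have "G (part_of u) u = G (part_of u) v"
      using uv(3) glue_eq[OF u] glue_eq[OF v] by simp
    then show ?thesis
      using inj_onD[of "G (part_of u)" "HP (part_of u)" u v] G[OF u(1)] u(2) v(2) True by simp
  next
    case False
    have "glue G u \<in> W (part_of u)" "glue G v \<in> W (part_of v)"
      using G[OF u(1)] G[OF v(1)] u(2) v(2) by (auto simp: glue_eq[OF u] glue_eq[OF v])
    moreover have "W (part_of u) \<inter> W (part_of v) = {}"
      using W_disjoint u(1) v(1) False by simp
    ultimately show ?thesis using uv(3) by (auto simp: disjoint_iff)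
  qed
qed

lemma glue_preserves_edges:
  assumes G: "\<And>i. i < l \<Longrightarrow> G i ` HP i \<subseteq> t i \<and> hom_on EH ET (HP i) (G i)"
    and "forward t" and e: "(u, v) \<in> EH"
  shows "(glue G u, glue G v) \<in> ET"
proof -
  have "u \<in> VH" "v \<in> VH" using e oriented by (auto simp: oriented_graph_def)
  then obtain i j where i: "i < l" "u \<in> HP i" and j: "j < l" "v \<in> HP j"
    using part_of_in by blast
  show ?thesis
  proof (cases "i = j")
    case True
    then show ?thesis using G[OF i(1)] i j e by (auto simp: hom_on_def glue_eq)
  next
    case False
    then have "arr EH (HP i) (HP j)" using edge_between_parts_arr e i j by blast
    moreover have "glue G u \<in> t i" "glue G v \<in> t j"
      using G[OF i(1)] G[OF j(1)] i(2) j(2) by (auto simp: glue_eq[OF i] glue_eq[OF j])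
    ultimately show ?thesis using \<open>forward t\<close> False i(1) j(1) unfolding forward_def by blast
  qed
qed

lemma forward_tuple_embedding:
  assumes t: "t \<in> subset_tuples l W m (\<lambda>_. {})" and "forward t"
  shows "\<exists>f\<in>embeddings VH EH VT ET. \<forall>i<l. f ` HP i \<subseteq> t i"
proof -
  have t_sub: "t i \<subseteq> W i" "card (t i) = m" if "i < l" for i
    using t that by (auto simp: subset_tuples_def PiE_iff)
  have "\<exists>g. inj_on g (HP i) \<and> g ` HP i \<subseteq> t i \<and> hom_on EH ET (HP i) g" if i: "i < l" for i
  proof (rule acyclic_embeds_into_tournament[OF tournament])
    show "finite (HP i)" using part_subset[OF i] finite_VH by (rule finite_subset)
    show "acyclic (EH \<inter> HP i \<times> HP i)" using parts_acyclic i by (simp add: induces_acyclic_def)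
    show "card (HP i) \<le> Suc (card VH - 1)" using card_part_le[OF i] by linarith
    show "2 ^ (card VH - 1) \<le> card (t i)" using t_sub[OF i] by (simp add: m_def)
    show "t i \<subseteq> VT" using t_sub[OF i] W_subset i by blast
  qed
  then obtain G where G: "\<And>i. i < l \<Longrightarrow> inj_on (G i) (HP i) \<and> G i ` HP i \<subseteq> t i \<and> hom_on EH ET (HP i) (G i)"
    by metis
  have image: "glue G ` HP i \<subseteq> t i" if "i < l" for i
    using G[OF that] glue_eq[OF that] by auto
  have "glue G u \<in> VT" if "u \<in> VH" for u
    using part_of_in[OF that] image t_sub(1) W_subset by blast
  then have "glue G \<in> VH \<rightarrow>\<^sub>E VT" by (simp add: PiE_iff glue_def)
  moreover have "inj_on (glue G) VH" using G t_sub by (intro inj_on_glue) blast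
  moreover have "(glue G u, glue G v) \<in> ET" if "(u, v) \<in> EH" for u v
    using G \<open>forward t\<close> that by (intro glue_preserves_edges) auto
  ultimately have "glue G \<in> embeddings VH EH VT ET" by (auto simp: embeddings_def)
  then show ?thesis using image by blast
qed

lemma card_forward_tuples_le:
  "real (card {t \<in> subset_tuples l W m (\<lambda>_. {}). forward t}) * (\<Prod>i<l. real (card (W i)) ^ card (HP i))
    \<le> real (card (embeddings VH EH VT ET)) * (real (card (subset_tuples l W m (\<lambda>_. {}))) * real m ^ card VH)"
proof -
  define Emb where "Emb = embeddings VH EH VT ET"
  define T where "T f = subset_tuples l W m (\<lambda>i. f ` HP i)" for f
  define N where "N = real (card (subset_tuples l W m (\<lambda>_. {})))"
  define Pn where "Pn = (\<Prod>i<l. real (card (W i)) ^ card (HP i))"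
  have fin_Emb: "finite Emb"
    unfolding Emb_def embeddings_def using finite_VH finite_VT
    by (auto intro: finite_subset[of _ "VH \<rightarrow>\<^sub>E VT"] finite_PiE)
  have fin_T: "finite (T f)" for f
    unfolding T_def using W_finite_large by (simp add: finite_subset_tuples)
  have T_bound: "real (card (T f)) * Pn \<le> N * real m ^ card VH" if "f \<in> Emb" for f
  proof -
    have "card (f ` HP i) = card (HP i)" if "i < l" for i
      using \<open>f \<in> Emb\<close> part_subset[OF that] unfolding Emb_def embeddings_def
      by (auto intro: card_image inj_on_subset)
    then have "(\<Prod>i<l. real (card (W i)) ^ card (f ` HP i)) = Pn"
      and "(\<Sum>i<l. card (f ` HP i)) = card VH"
      by (simp_all add: Pn_def sum_card_parts[symmetric])
    then show ?thesis
      using subset_tuples_containing_le[OF W_finite_large, of "\<lambda>i. f ` HP i"] by (simp add: T_def N_def)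
  qed
  have "{t \<in> subset_tuples l W m (\<lambda>_. {}). forward t} \<subseteq> (\<Union>f\<in>Emb. T f)"
  proof
    fix t assume t: "t \<in> {t \<in> subset_tuples l W m (\<lambda>_. {}). forward t}"
    then obtain f where "f \<in> Emb" "\<forall>i<l. f ` HP i \<subseteq> t i"
      using forward_tuple_embedding unfolding Emb_def by blast
    moreover from this have "t \<in> T f" using t by (auto simp: T_def subset_tuples_def PiE_iff)
    ultimately show "t \<in> (\<Union>f\<in>Emb. T f)" by blast
  qed
  then have "card {t \<in> subset_tuples l W m (\<lambda>_. {}). forward t} \<le> card (\<Union>f\<in>Emb. T f)"
    using fin_Emb fin_T by (intro card_mono) auto
  also have "\<dots> \<le> (\<Sum>f\<in>Emb. card (T f))" using fin_Emb by (rule card_UN_le)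
  finally have "real (card {t \<in> subset_tuples l W m (\<lambda>_. {}). forward t}) * Pn \<le> (\<Sum>f\<in>Emb. real (card (T f))) * Pn"
    unfolding Pn_def by (intro mult_right_mono) (simp_all flip: of_nat_sum add: prod_nonneg)
  also have "\<dots> = (\<Sum>f\<in>Emb. real (card (T f)) * Pn)" by (rule sum_distrib_right)
  also have "\<dots> \<le> (\<Sum>f\<in>Emb. N * real m ^ card VH)" using T_bound by (rule sum_mono)
  finally show ?thesis by (simp add: Emb_def N_def Pn_def)
qed

lemma card_nonforward_tuples_le:
  assumes "0 \<le> \<eta>"
  shows "real (card {t \<in> subset_tuples l W m (\<lambda>_. {}). \<not> forward t})
    \<le> real (card VH) ^ 2 * \<eta> * real m ^ 2 * real (card (subset_tuples l W m (\<lambda>_. {})))"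
proof -
  define P where "P = {(i, j). i < l \<and> j < l \<and> i \<noteq> j \<and> arr EH (HP i) (HP j)}"
  define D where "D i j = {p \<in> W i \<times> W j. p \<notin> ET}" for i j
  have D_small: "real (card (D i j)) \<le> \<eta> * (real (card (W i)) * real (card (W j)))" if "(i, j) \<in> P" for i j
    using that W_finite_large W_dense unfolding P_def D_def by (intro card_non_edges_le) auto
  have D_sub: "D i j \<subseteq> W i \<times> W j" for i j by (auto simp: D_def)
  have P_sub: "P \<subseteq> {(i, j). i < l \<and> j < l \<and> i \<noteq> j}" by (auto simp: P_def)
  have "card P \<le> card ({..<l} \<times> {..<l})" by (intro card_mono) (auto simp: P_def)
  also have "\<dots> \<le> card VH ^ 2" using number_of_parts_le by (simp add: power2_eq_square mult_le_mono)
  finally have "real (card P) \<le> real (card VH ^ 2)" by (rule of_nat_mono)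
  define T0 where "T0 = subset_tuples l W m (\<lambda>_. {})"
  define Hit where "Hit = {t \<in> T0. \<exists>(i, j)\<in>P. \<exists>(x, y)\<in>D i j. x \<in> t i \<and> y \<in> t j}"
  have "{t \<in> T0. \<not> forward t} \<subseteq> Hit"
  proof
    fix t assume "t \<in> {t \<in> T0. \<not> forward t}"
    then have t: "t \<in> T0" "\<not> forward t" by auto
    then obtain i j x y where ij: "i < l" "j < l" "i \<noteq> j" "arr EH (HP i) (HP j)"
      and xy: "x \<in> t i" "y \<in> t j" "(x, y) \<notin> ET"
      unfolding forward_def by blast
    have "t i \<subseteq> W i" "t j \<subseteq> W j" using t(1) ij(1,2) by (auto simp: T0_def subset_tuples_def PiE_iff)
    then have "(i, j) \<in> P" "(x, y) \<in> D i j" using ij xy by (auto simp: P_def D_def)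
    then show "t \<in> Hit" using t(1) xy(1,2) by (auto simp: Hit_def)
  qed
  moreover have "finite T0" unfolding T0_def using W_finite_large by (simp add: finite_subset_tuples)
  then have "finite Hit" unfolding Hit_def by simp
  ultimately have "card {t \<in> T0. \<not> forward t} \<le> card Hit" by (rule card_mono[rotated])
  then have "real (card {t \<in> T0. \<not> forward t}) \<le> real (card Hit)" by (rule of_nat_mono)
  also have "\<dots> \<le> real (card P) * \<eta> * real m ^ 2 * real (card T0)"
    unfolding Hit_def T0_def
    by (intro subset_tuples_hitting_le[OF W_finite_large assms P_sub]) (simp add: D_sub D_small)
  also have "\<dots> \<le> real (card VH) ^ 2 * \<eta> * real m ^ 2 * real (card T0)"
    using \<open>real (card P) \<le> real (card VH ^ 2)\<close> assms by (intro mult_right_mono) auto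
  finally show ?thesis by (simp add: T0_def)
qed

lemma card_copies_lower_bound:
  assumes "0 \<le> \<eta>" and "2 * real (card VH) ^ 2 * real m ^ 2 * \<eta> \<le> 1"
  shows "(\<Prod>i<l. real (card (W i)) ^ card (HP i))
    \<le> 2 * real m ^ card VH * real (card VH) ^ card VH * real (card (copies VH EH VT ET))"
proof -
  define T0 where "T0 = subset_tuples l W m (\<lambda>_. {})"
  define N where "N = real (card T0)"
  define Pn where "Pn = (\<Prod>i<l. real (card (W i)) ^ card (HP i))"
  define Emb where "Emb = real (card (embeddings VH EH VT ET))"
  have "finite T0" unfolding T0_def using W_finite_large by (simp add: finite_subset_tuples)
  have "card T0 > 0"
    unfolding T0_def using W_finite_large by (auto simp: card_subset_tuples intro!: prod_pos zero_less_binomial)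
  then have "N > 0" by (simp add: N_def)
  have "card {t \<in> T0. forward t} + card {t \<in> T0. \<not> forward t} = card T0"
    using \<open>finite T0\<close> by (subst card_Un_disjoint[symmetric]) (auto intro: arg_cong[where f = card])
  moreover have "real (card {t \<in> T0. \<not> forward t}) \<le> N / 2"
  proof -
    have "real (card {t \<in> T0. \<not> forward t}) \<le> real (card VH) ^ 2 * \<eta> * real m ^ 2 * N"
      using card_nonforward_tuples_le[OF assms(1)] by (simp add: T0_def N_def)
    also have "\<dots> \<le> N / 2" using assms(2) \<open>N > 0\<close> by (simp add: field_simps)
    finally show ?thesis .
  qed
  ultimately have "N / 2 \<le> real (card {t \<in> T0. forward t})" unfolding N_def by linarith
  then have "N / 2 * Pn \<le> real (card {t \<in> T0. forward t}) * Pn"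
    by (rule mult_right_mono) (simp add: Pn_def prod_nonneg)
  also have "\<dots> \<le> Emb * (N * real m ^ card VH)"
    using card_forward_tuples_le by (simp add: T0_def N_def Pn_def Emb_def)
  finally have "Pn \<le> 2 * real m ^ card VH * Emb"
    using \<open>N > 0\<close> by (simp add: field_simps)
  also have "\<dots> \<le> 2 * real m ^ card VH * (real (card VH) ^ card VH * real (card (copies VH EH VT ET)))"
    using card_embeddings_le_copies[OF finite_VH finite_VT] tournament
    by (intro mult_left_mono)
      (simp_all add: Emb_def tournament_def oriented_graph_def flip: of_nat_power of_nat_mult)
  finally show ?thesis by (simp add: Pn_def mult.assoc)
qed

end

theorem lemma3p3:
  "\<forall>h::nat. h > 0 \<longrightarrow> (\<exists>\<eta>::real. \<eta> > 0 \<and> (\<exists>\<alpha>::real. \<alpha> > 0 \<and>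
     (\<forall>(VH::nat set) EH (l::nat) (HP::nat \<Rightarrow> nat set) (VT::nat set) ET (W::nat \<Rightarrow> nat set).
        finite VH \<and> card VH = h \<and> oriented_graph VH EH
      \<and> (\<forall>i<l. HP i \<noteq> {}) \<and> (\<Union>i<l. HP i) = VH
      \<and> (\<forall>i<l. \<forall>j<l. i \<noteq> j \<longrightarrow> HP i \<inter> HP j = {})
      \<and> (\<forall>i<l. induces_acyclic EH (HP i))
      \<and> (\<forall>i<l. \<forall>j<l. i < j \<longrightarrow> arr EH (HP i) (HP j) \<or> arr EH (HP j) (HP i))
      \<and> tournament VT ET
      \<and> (\<forall>i<l. W i \<subseteq> VT)
      \<and> (\<forall>i<l. \<forall>j<l. i \<noteq> j \<longrightarrow> W i \<inter> W j = {})
      \<and> (\<forall>i<l. card (W i) \<ge> 2 ^ (h - 1))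
      \<and> (\<forall>i<l. \<forall>j<l. i \<noteq> j \<longrightarrow> arr EH (HP i) (HP j) \<longrightarrow> dens ET (W i) (W j) \<ge> 1 - \<eta>)
      \<longrightarrow> real (card (copies VH EH VT ET))
            \<ge> \<alpha> * (\<Prod>i<l. real (card (W i)) ^ card (HP i)))))"
proof (intro allI impI, goal_cases)
  case (1 h)
  define \<eta> :: real where "\<eta> = 1 / (2 * real h ^ 2 * real ((2::nat) ^ (h - 1)) ^ 2)"
  define \<alpha> :: real where "\<alpha> = 1 / (2 * real ((2::nat) ^ (h - 1)) ^ h * real h ^ h)"
  show ?case
  proof (rule exI[of _ \<eta>], intro conjI exI[of _ \<alpha>] allI impI, goal_cases)
    case 1
    then show ?case using \<open>0 < h\<close> by (simp add: \<eta>_def)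
  next
    case 2
    then show ?case using \<open>0 < h\<close> by (simp add: \<alpha>_def)
  next
    case (3 VH EH l HP VT ET W)
    then interpret dense_blowup VH EH l HP VT ET W \<eta>
      by (simp add: dense_blowup_def)
    have "card VH = h" using 3 by blast
    then have "(\<Prod>i<l. real (card (W i)) ^ card (HP i))
        \<le> 2 * real ((2::nat) ^ (h - 1)) ^ h * real h ^ h * real (card (copies VH EH VT ET))"
      using card_copies_lower_bound by (simp add: m_def \<eta>_def)
    then show ?case using \<open>0 < h\<close> by (simp add: \<alpha>_def field_simps)
  qed
qed

end
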